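(* Let $D_{+2}$, $D_{+1}$, $D_0$, $D_{-1}$ be four unoriented link diagrams in the plane that are identical outside a small disk $B$, and inside $B$ each consists of two strands running from the bottom of $B$ to the top of $B$, as follows: in $D_0$ the two strands are parallel with no crossing; in $D_{+1}$ they cross once, forming the tangle $\sigma$ (the elementary braid generator on two strands, with a fixed choice of which strand passes over); in $D_{+2}$ they form the braid $\sigma^2$ (two successive crossings of the same type as in $D_{+1}$); in $D_{-1}$ they form $\sigma^{-1}$ (a single crossing of the opposite type). Then $$R_{D_{+2}}(\lambda) = (1-\lambda)\,R_{D_{+1}}(\lambda) + (\lambda-1)\,R_{D_0}(\lambda) + R_{D_{-1}}(\lambda).$$
   Context: For an oriented link $L$ in $\mathbb{R}^3$ let $V_L(t)$ be its Jones polynomial (a Laurent polynomial in $\sqrt t$, normalised so the unknot has $V=1$). The product $V_L(t)V_L(t^{-1})$ is a Laurent polynomial in $t$ invariant under $t\mapsto t^{-1}$, so it can be written as an ordinary polynomial $r_L(\lambda)$ in $\lambda=t+t^{-1}$, i.e. $r_L(t+t^{-1})=V_L(t)V_L(t^{-1})$. Define $R_L(\lambda)=(\lambda+2)\,r_L(\lambda)$ (so the unknot has $R=\lambda+2$ and the empty link has $R=1$). $R_L$ does not depend on the orientation of $L$, so it is defined for unoriented links, and for a link diagram $D$ we write $R_D$ for $R$ of the link it represents. *)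

theory Defs
  imports Complex_Main
begin

text \<open>A crossing (i,j,k,l) lists the labels of the four edge-ends meeting at the
crossing in counterclockwise order, starting at an end of the under-strand; so
i,k lie on the under-strand and j,l on the over-strand.  (i,j,k,l) and (k,l,i,j)
describe the same crossing, (j,k,l,i) the crossing with over/under swapped.
A diagram is a list of crossings together with a list of plain arcs (pairs of
labels joined by a crossing-free piece of strand; a pair (x,x) is a free circle).\<close>

type_synonym pd_crossing = "nat \<times> nat \<times> nat \<times> nat"
type_synonym diagram = "pd_crossing list \<times> (nat \<times> nat) list"

fun xlabels :: "pd_crossing \<Rightarrow> nat list" where
  "xlabels (i, j, k, l) = [i, j, k, l]"

definition occs :: "diagram \<Rightarrow> nat list" where
  "occs D = concat (map xlabels (fst D)) @ concat (map (\<lambda>(x, y). [x, y]) (snd D))"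

definition labels :: "diagram \<Rightarrow> nat set" where
  "labels D = set (occs D)"

definition well_formed :: "diagram \<Rightarrow> bool" where
  "well_formed D \<longleftrightarrow> (\<forall>x \<in> labels D. count_list (occs D) x = 2)"

definition n_components :: "'a set \<Rightarrow> ('a \<times> 'a) set \<Rightarrow> nat" where
  "n_components V E = card (V // (((E \<union> E\<inverse>) \<inter> (V \<times> V))\<^sup>*))"

subsection \<open>Planarity (genus 0 of the underlying rotation system)\<close>

definition slots :: "diagram \<Rightarrow> (nat \<times> nat) set" where
  "slots D = {(c, p). c < length (fst D) \<and> p < 4}"

definition slot_label :: "diagram \<Rightarrow> nat \<times> nat \<Rightarrow> nat" where
  "slot_label D q = xlabels (fst D ! fst q) ! snd q"

definition arc_eq :: "diagram \<Rightarrow> (nat \<times> nat) set" where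
  "arc_eq D = (set (snd D) \<union> (set (snd D))\<inverse>)\<^sup>*"

text \<open>The crossing-end at the other end of the edge leaving slot q.\<close>
definition alpha :: "diagram \<Rightarrow> nat \<times> nat \<Rightarrow> nat \<times> nat" where
  "alpha D q = (THE q'. q' \<in> slots D \<and> q' \<noteq> q \<and> (slot_label D q, slot_label D q') \<in> arc_eq D)"

definition rot :: "nat \<times> nat \<Rightarrow> nat \<times> nat" where
  "rot q = (fst q, (snd q + 1) mod 4)"

definition phi :: "diagram \<Rightarrow> nat \<times> nat \<Rightarrow> nat \<times> nat" where
  "phi D q = rot (alpha D q)"

definition n_faces :: "diagram \<Rightarrow> nat" where
  "n_faces D = card (slots D // {(q, q'). q \<in> slots D \<and> (\<exists>m. (phi D ^^ m) q = q')})"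

definition n_graph_components :: "diagram \<Rightarrow> nat" where
  "n_graph_components D = n_components {..<length (fst D)}
     {(c, c'). \<exists>p p'. (c, p) \<in> slots D \<and> alpha D (c, p) = (c', p')}"

text \<open>Euler's formula V - E + F = 2k, with V = #crossings, E = 2V.\<close>
definition planar :: "diagram \<Rightarrow> bool" where
  "planar D \<longleftrightarrow> n_faces D = length (fst D) + 2 * n_graph_components D"

definition is_diagram :: "diagram \<Rightarrow> bool" where
  "is_diagram D \<longleftrightarrow> well_formed D \<and> planar D"

fun smooth :: "bool \<Rightarrow> pd_crossing \<Rightarrow> (nat \<times> nat) list" where
  "smooth True (i, j, k, l) = [(i, l), (j, k)]"
| "smooth False (i, j, k, l) = [(i, j), (k, l)]"

definition state_loops :: "diagram \<Rightarrow> bool list \<Rightarrow> nat" where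
  "state_loops D s = n_components (labels D)
     (set (snd D @ concat (map (\<lambda>(b, x). smooth b x) (zip s (fst D)))))"

definition loop_value :: "complex \<Rightarrow> complex" where
  "loop_value A = - (A ^ 2) - inverse A ^ 2"

text \<open>Unnormalised Kauffman bracket (empty diagram 1, unknot loop_value A).\<close>
definition bracket :: "diagram \<Rightarrow> complex \<Rightarrow> complex" where
  "bracket D A = (\<Sum>s \<in> {s. length s = length (fst D)}.
      A powi (int (count_list s True) - int (count_list s False)) * loop_value A ^ state_loops D s)"

text \<open>Jones polynomial of the diagram with writhe w (w = writhe of an orientation),
evaluated at t = A^(-4), i.e. sqrt t = A^(-2); normalised so the unknot has V = 1.\<close>
definition jones_V :: "diagram \<Rightarrow> int \<Rightarrow> complex \<Rightarrow> complex" where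
  "jones_V D w A = (- (A ^ 3)) powi (- w) * bracket D A / loop_value A"

definition lam :: "complex \<Rightarrow> complex" where
  "lam A = A ^ 4 + inverse A ^ 4"   \<comment> \<open>lambda = t + t^(-1) for t = A^(-4)\<close>

text \<open>R_D evaluated at lambda = t + 1/t, t = A^(-4): (lambda+2) V(t) V(t^(-1)).
The writhe factors cancel in V(t)V(t^(-1)) (see lemma below), so R does not
depend on the orientation; we use w = 0.\<close>
definition R_diag :: "diagram \<Rightarrow> complex \<Rightarrow> complex" where
  "R_diag D A = (lam A + 2) * jones_V D 0 A * jones_V D 0 (inverse A)"

lemma R_diag_any_writhe:
  assumes "A \<noteq> 0"
  shows "R_diag D A = (lam A + 2) * jones_V D w A * jones_V D w (inverse A)"
proof -
  have "(- (A ^ 3)) powi (- w) * (- (inverse A ^ 3)) powi (- w) = 1"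
    using assms by (simp add: power_int_mult_distrib[symmetric] power_mult_distrib[symmetric])
  then show ?thesis
    unfolding R_diag_def jones_V_def by (simp add: field_simps)
qed

end

theory Submission
  imports Defs
begin

(* By the Kauffman skein relation <X> = A <0> + A^-1 <inf>, applied to both crossings of
   the twist, its bracket is a combination of four smoothed diagrams.  Erasing the labels
   e, f of the two arcs between the crossings turns three of them into <0> or <inf> and the
   fourth into <inf> plus a free loop of value delta = -A^2 - A^-2, so the twist has bracket
   A^2 <0> + (2 + A^-2 delta) <inf> = A^2 <0> + (1 - A^-4) <inf>, while single crossings of
   either sign give A <0> + A^-1 <inf> and A <inf> + A^-1 <0>.  As lambda + 2 = delta^2,
   R_D(lambda) is just <D>(A) <D>(A^-1), and the relation becomes a polynomial identity in
   A, A^-1 and the brackets of the two smoothings at A and A^-1. *)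

definition component_rel :: "'a set \<Rightarrow> ('a \<times> 'a) set \<Rightarrow> ('a \<times> 'a) set" where
  "component_rel V E = ((E \<union> E\<inverse>) \<inter> (V \<times> V))\<^sup>*"

lemma n_components_eq_card_quotient: "n_components V E = card (V // component_rel V E)"
  unfolding n_components_def component_rel_def ..

lemma equiv_component_rel: "equiv UNIV (component_rel V E)"
proof -
  have "sym ((E \<union> E\<inverse>) \<inter> (V \<times> V))" by (auto simp: sym_def)
  then show ?thesis unfolding component_rel_def equiv_def
    by (auto simp: refl_rtrancl trans_rtrancl intro!: sym_rtrancl)
qed

lemma component_rel_closed: "(x, y) \<in> component_rel V E \<Longrightarrow> x \<in> V \<Longrightarrow> y \<in> V"
  unfolding component_rel_def by (induction rule: rtrancl_induct) auto

lemma n_components_cong: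
  assumes "V1 = V2" "E1 \<union> E1\<inverse> = E2 \<union> E2\<inverse>"
  shows "n_components V1 E1 = n_components V2 E2"
  unfolding n_components_def using assms by simp

text \<open>\<open>C \<mapsto> C \<inter> V\<close> is a bijection between the two quotients.\<close>

lemma card_quotient_retraction:
  assumes "V \<subseteq> V'" "h ` V' \<subseteq> V" "\<forall>x\<in>V. h x = x"
    and iff: "\<forall>x\<in>V'. \<forall>y\<in>V'. (x, y) \<in> r' \<longleftrightarrow> (h x, h y) \<in> r"
    and closed: "\<forall>x\<in>V. r `` {x} \<subseteq> V"
    and "refl r" and "equiv UNIV r'"
  shows "card (V' // r') = card (V // r)"
proof -
  have class_restrict: "r' `` {x} \<inter> V = r `` {h x}" if "x \<in> V'" for x
  proof
    show "r' `` {x} \<inter> V \<subseteq> r `` {h x}" using iff that assms(1,3) by fastforce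
    show "r `` {h x} \<subseteq> r' `` {x} \<inter> V"
    proof
      fix y assume y: "y \<in> r `` {h x}"
      have "h x \<in> V" using that assms(2) by auto
      then have "y \<in> V" using closed y by auto
      then show "y \<in> r' `` {x} \<inter> V" using iff that assms(1,3) y by force
    qed
  qed
  have "inj_on (\<lambda>C. C \<inter> V) (V' // r')"
  proof (rule inj_onI)
    fix C D assume "C \<in> V' // r'" "D \<in> V' // r'" and CD: "C \<inter> V = D \<inter> V"
    then obtain x y where x: "x \<in> V'" "C = r' `` {x}" and y: "y \<in> V'" "D = r' `` {y}"
      by (auto simp: quotient_def)
    have "r `` {h x} = r `` {h y}" using class_restrict x y CD by auto
    moreover have "h y \<in> r `` {h y}" using \<open>refl r\<close> by (auto simp: refl_on_def)
    ultimately have "(x, y) \<in> r'" using iff x y by auto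
    then show "C = D" using x y \<open>equiv UNIV r'\<close> by (simp add: equiv_class_eq)
  qed
  moreover have "(\<lambda>C. C \<inter> V) ` (V' // r') = V // r"
  proof
    show "(\<lambda>C. C \<inter> V) ` (V' // r') \<subseteq> V // r"
      using class_restrict assms(2) by (auto simp: quotient_def image_subset_iff)
    show "V // r \<subseteq> (\<lambda>C. C \<inter> V) ` (V' // r')"
    proof
      fix C assume "C \<in> V // r"
      then obtain z where z: "z \<in> V" "C = r `` {z}" by (auto simp: quotient_def)
      then have "C = r' `` {z} \<inter> V" using class_restrict[of z] assms(1,3) by auto
      moreover have "r' `` {z} \<in> V' // r'" using z assms(1) by (auto simp: quotient_def)
      ultimately show "C \<in> (\<lambda>C. C \<inter> V) ` (V' // r')" by auto
    qed
  qed
  ultimately show ?thesis by (intro bij_betw_same_card bij_betw_imageI)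
qed

lemma component_rel_contract_vertex:
  assumes "v \<notin> V" "p \<in> V" "q \<in> V" and avoid: "\<forall>(x, y) \<in> G. x \<noteq> v \<and> y \<noteq> v"
    and h_def: "h = (\<lambda>x. if x = v then p else x)"
  shows "(x, y) \<in> component_rel (insert v V) (G \<union> {(p, v), (v, q)})
    \<longleftrightarrow> (h x, h y) \<in> component_rel V (G \<union> {(p, q)})"
proof -
  let ?V' = "insert v V" and ?E' = "G \<union> {(p, v), (v, q)}" and ?E = "G \<union> {(p, q)}"
  let ?r' = "component_rel ?V' ?E'" and ?r = "component_rel V ?E"
  have equiv': "equiv UNIV ?r'" by (rule equiv_component_rel)
  have via_v: "(p, q) \<in> ?r'" "(q, p) \<in> ?r'"
  proof -
    have "(p, v) \<in> ?r'" "(v, q) \<in> ?r'" "(q, v) \<in> ?r'" "(v, p) \<in> ?r'"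
      using assms unfolding component_rel_def by (auto intro!: r_into_rtrancl)
    then show "(p, q) \<in> ?r'" "(q, p) \<in> ?r'" using equiv' by (meson equiv_def transD)+
  qed
  have "(?E \<union> ?E\<inverse>) \<inter> (V \<times> V) \<subseteq> ?r'"
  proof
    fix z assume z: "z \<in> (?E \<union> ?E\<inverse>) \<inter> (V \<times> V)"
    show "z \<in> ?r'"
    proof (cases "z = (p, q) \<or> z = (q, p)")
      case False
      then show ?thesis using z unfolding component_rel_def by (auto intro!: r_into_rtrancl)
    qed (use via_v in auto)
  qed
  then have "?r \<subseteq> ?r'\<^sup>*" unfolding component_rel_def[of V] by (rule rtrancl_mono)
  then have r_sub: "?r \<subseteq> ?r'" unfolding component_rel_def by simp
  have to_retract: "(x, h x) \<in> ?r'" "(h x, x) \<in> ?r'" for x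
    using assms equiv' unfolding component_rel_def h_def
    by (auto intro!: r_into_rtrancl simp: converse_rtrancl_into_rtrancl)
  show ?thesis
  proof
    show "(h x, h y) \<in> ?r" if "(x, y) \<in> ?r'"
      using that unfolding component_rel_def[of ?V']
    proof (induction rule: rtrancl_induct)
      case (step y z)
      have "(h y, h z) \<in> (?E \<union> ?E\<inverse>) \<inter> (V \<times> V) \<or> h y = h z"
        using step(2) assms unfolding h_def by auto
      then have "(h y, h z) \<in> ?r" unfolding component_rel_def by auto
      with step(3) show ?case unfolding component_rel_def by (meson rtrancl_trans)
    qed (simp add: component_rel_def)
    show "(x, y) \<in> ?r'" if "(h x, h y) \<in> ?r"
      using that r_sub to_retract[of x] to_retract[of y] equiv' by (meson equiv_def subsetD transD)
  qed
qed

lemma n_components_contract_vertex: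
  assumes "v \<notin> V" "p \<in> V" "q \<in> V" and "\<forall>(x, y) \<in> G. x \<noteq> v \<and> y \<noteq> v"
  shows "n_components (insert v V) (G \<union> {(p, v), (v, q)}) = n_components V (G \<union> {(p, q)})"
proof -
  define h where "h = (\<lambda>x. if x = v then p else x)"
  let ?r' = "component_rel (insert v V) (G \<union> {(p, v), (v, q)})"
  let ?r = "component_rel V (G \<union> {(p, q)})"
  have "card (insert v V // ?r') = card (V // ?r)"
  proof (rule card_quotient_retraction[where h = h])
    show "\<forall>x\<in>insert v V. \<forall>y\<in>insert v V. (x, y) \<in> ?r' \<longleftrightarrow> (h x, h y) \<in> ?r"
      using component_rel_contract_vertex[OF assms h_def] by blast
    show "\<forall>x\<in>V. ?r `` {x} \<subseteq> V" using component_rel_closed by fast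
    show "refl ?r" using equiv_component_rel equiv_def by blast
  qed (use assms equiv_component_rel in \<open>auto simp: h_def\<close>)
  then show ?thesis unfolding n_components_eq_card_quotient .
qed

lemma n_components_add_loop:
  assumes "e \<notin> V" "f \<notin> V" "finite V"
    and avoid: "\<forall>(x, y) \<in> G. x \<noteq> e \<and> y \<noteq> e \<and> x \<noteq> f \<and> y \<noteq> f"
  shows "n_components (insert e (insert f V)) (G \<union> {(e, f)}) = Suc (n_components V G)"
proof -
  let ?V' = "insert e (insert f V)" and ?E' = "G \<union> {(e, f)}"
  let ?r' = "component_rel ?V' ?E'" and ?r = "component_rel V G"
  have equiv': "equiv UNIV ?r'" by (rule equiv_component_rel)
  have r_sub: "?r \<subseteq> ?r'" unfolding component_rel_def by (rule rtrancl_mono) auto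
  have stays_in_V: "(x, y) \<in> ?r" if "(x, y) \<in> ?r'" "x \<in> V" for x y
    using that(1) unfolding component_rel_def[of ?V']
  proof (induction rule: rtrancl_induct)
    case (step y z)
    have "y \<in> V" using step(3) component_rel_closed that(2) by metis
    then have "(y, z) \<in> (G \<union> G\<inverse>) \<inter> (V \<times> V)" using step(2) assms by auto
    then show ?case using step(3) unfolding component_rel_def by (meson r_into_rtrancl rtrancl_trans)
  qed (simp add: component_rel_def)
  have class_V: "?r' `` {x} = ?r `` {x}" if "x \<in> V" for x
    using stays_in_V[OF _ that] r_sub by auto
  have "(e, f) \<in> ?r'" unfolding component_rel_def by (auto intro!: r_into_rtrancl)
  have "y \<in> {e, f}" if "(e, y) \<in> ?r'" for y
    using that unfolding component_rel_def[of ?V']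
    by (induction rule: rtrancl_induct) (use avoid in auto)
  then have class_e: "?r' `` {e} = {e, f}"
    using \<open>(e, f) \<in> ?r'\<close> equiv' by (auto simp: equiv_def refl_on_def)
  then have class_f: "?r' `` {f} = {e, f}"
    using \<open>(e, f) \<in> ?r'\<close> equiv' by (metis equiv_class_eq)
  have "?V' // ?r' = insert {e, f} (V // ?r)"
    unfolding quotient_def using class_e class_f class_V by auto
  moreover have "finite (V // ?r)"
    using \<open>finite V\<close> by (simp add: quotient_def)
  moreover have "{e, f} \<notin> V // ?r"
  proof
    assume "{e, f} \<in> V // ?r"
    then obtain x where "x \<in> V" "(x, e) \<in> ?r" by (auto simp: quotient_def)
    then show False using component_rel_closed \<open>e \<notin> V\<close> by metis
  qed
  ultimately show ?thesis by (simp add: n_components_eq_card_quotient)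
qed

definition state_arcs :: "pd_crossing list \<Rightarrow> (nat \<times> nat) list \<Rightarrow> bool list \<Rightarrow> (nat \<times> nat) set" where
  "state_arcs cs ps s = set ps \<union> set (concat (map (\<lambda>(b, x). smooth b x) (zip s cs)))"

lemma state_loops_eq_n_components:
  "state_loops (cs, ps) s = n_components (labels (cs, ps)) (state_arcs cs ps s)"
  unfolding state_loops_def state_arcs_def by simp

lemma state_arcs_append: "state_arcs cs (ps @ qs) s = state_arcs cs ps s \<union> set qs"
  unfolding state_arcs_def by auto

lemma labels_conv:
  "labels (cs, ps) = (\<Union>x \<in> set cs. set (xlabels x)) \<union> fst ` set ps \<union> snd ` set ps"
  unfolding labels_def occs_def by force

lemma state_arcs_in_labels:
  assumes "(x, y) \<in> state_arcs cs ps s"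
  shows "x \<in> labels (cs, ps) \<and> y \<in> labels (cs, ps)"
proof (cases "(x, y) \<in> set ps")
  case True
  then show ?thesis unfolding labels_def occs_def by force
next
  case False
  then obtain b c where bc: "(b, c) \<in> set (zip s cs)" "(x, y) \<in> set (smooth b c)"
    using assms unfolding state_arcs_def by auto
  then have "c \<in> set cs" by (meson set_zip_rightD)
  moreover have "x \<in> set (xlabels c) \<and> y \<in> set (xlabels c)"
    using bc(2) by (cases c; cases b) auto
  ultimately show ?thesis unfolding labels_def occs_def by auto
qed

lemma state_loops_snoc:
  assumes "length s = length cs"
  shows "state_loops (cs @ [x], ps) (s @ [b]) = state_loops (cs, ps @ smooth b x) s"
proof -
  have "labels (cs @ [x], ps) = labels (cs, ps @ smooth b x)"
    unfolding labels_conv by (cases x; cases b) auto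
  moreover have "zip (s @ [b]) (cs @ [x]) = zip s cs @ [(b, x)]" using assms by simp
  ultimately show ?thesis unfolding state_loops_def by (simp add: Un_ac)
qed

lemma bool_lists_length_Suc:
  "{s :: bool list. length s = Suc n} = (\<lambda>(s, b). s @ [b]) ` ({s. length s = n} \<times> UNIV)"
proof (rule equalityI)
  show "{s :: bool list. length s = Suc n} \<subseteq> (\<lambda>(s, b). s @ [b]) ` ({s. length s = n} \<times> UNIV)"
  proof
    fix s :: "bool list" assume "s \<in> {s. length s = Suc n}"
    then have "s = butlast s @ [last s]" "length (butlast s) = n"
      by (auto intro: append_butlast_last_id[symmetric])
    then show "s \<in> (\<lambda>(s, b). s @ [b]) ` ({s. length s = n} \<times> UNIV)" by force
  qed
qed auto

lemma bracket_snoc: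
  assumes "A \<noteq> 0"
  shows "bracket (cs @ [x], ps) A = A * bracket (cs, ps @ smooth True x) A
           + inverse A * bracket (cs, ps @ smooth False x) A"
proof -
  let ?n = "length cs"
  define w where "w s = A powi (int (count_list s True) - int (count_list s False))" for s
  define f where "f s = w s * loop_value A ^ state_loops (cs @ [x], ps) s" for s
  define g where "g b s = w s * loop_value A ^ state_loops (cs, ps @ smooth b x) s" for b s
  have inj: "inj_on (\<lambda>(s, b). s @ [b]) ({s. length s = ?n} \<times> (UNIV :: bool set))"
    by (auto simp: inj_on_def)
  have w_snoc: "w (s @ [True]) = A * w s" "w (s @ [False]) = inverse A * w s" for s
    using assms unfolding w_def
    by (simp_all add: power_int_add power_int_diff field_simps flip: add.assoc diff_diff_eq)
  have "bracket (cs @ [x], ps) A = sum f {s. length s = Suc ?n}"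
    unfolding bracket_def f_def w_def by simp
  also have "\<dots> = (\<Sum>(s, b) \<in> {s. length s = ?n} \<times> UNIV. f (s @ [b]))"
    unfolding bool_lists_length_Suc by (subst sum.reindex[OF inj]) (simp add: case_prod_beta')
  also have "\<dots> = (\<Sum>s \<in> {s. length s = ?n}. f (s @ [True]) + f (s @ [False]))"
    by (subst sum.cartesian_product[symmetric]) (simp add: UNIV_bool add.commute)
  also have "\<dots> = (\<Sum>s \<in> {s. length s = ?n}. A * g True s + inverse A * g False s)"
    by (rule sum.cong) (simp_all add: f_def g_def w_snoc state_loops_snoc)
  also have "\<dots> = A * bracket (cs, ps @ smooth True x) A + inverse A * bracket (cs, ps @ smooth False x) A"
    unfolding bracket_def g_def w_def by (simp add: sum.distrib sum_distrib_left)
  finally show ?thesis .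
qed

lemma bracket_state_loops_shift:
  assumes "\<And>s. length s = length cs \<Longrightarrow> state_loops (cs, ps) s = state_loops (cs, ps') s + k"
  shows "bracket (cs, ps) A = loop_value A ^ k * bracket (cs, ps') A"
  unfolding bracket_def sum_distrib_left
  by (rule sum.cong) (auto simp: assms power_add)

lemma bracket_state_loops_cong:
  assumes "\<And>s. length s = length cs \<Longrightarrow> state_loops (cs, ps) s = state_loops (cs, ps') s"
  shows "bracket (cs, ps) A = bracket (cs, ps') A"
  using bracket_state_loops_shift[of cs ps ps' 0] assms by simp

lemma bracket_arcs_cong:
  assumes "set ps \<union> (set ps)\<inverse> = set ps' \<union> (set ps')\<inverse>"
  shows "bracket (cs, ps) A = bracket (cs, ps') A"
proof -
  have "Field (set ps) = Field (set ps')" using arg_cong[OF assms, of Field] by simp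
  then have labels: "labels (cs, ps) = labels (cs, ps')"
    unfolding labels_conv by (simp add: Field_def fst_eq_Domain snd_eq_Range Un_assoc)
  have sym_Un: "(S \<union> Q) \<union> (S \<union> Q)\<inverse> = (S \<union> S\<inverse>) \<union> (Q \<union> Q\<inverse>)" for S Q :: "(nat \<times> nat) set"
    by auto
  show ?thesis
  proof (rule bracket_state_loops_cong)
    fix s show "state_loops (cs, ps) s = state_loops (cs, ps') s"
      unfolding state_loops_eq_n_components
      by (rule n_components_cong[OF labels]) (simp only: state_arcs_def sym_Un assms)
  qed
qed

lemma bracket_contract_arcs:
  assumes "v \<notin> labels (cs, ps)" "p \<noteq> v" "q \<noteq> v"
  shows "bracket (cs, ps @ [(p, v), (v, q)]) A = bracket (cs, ps @ [(p, q)]) A"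
proof (rule bracket_state_loops_cong)
  fix s
  let ?V = "insert p (insert q (labels (cs, ps)))"
  have avoid: "\<forall>(x, y) \<in> state_arcs cs ps s. x \<noteq> v \<and> y \<noteq> v"
    using assms(1) state_arcs_in_labels by fast
  have "state_loops (cs, ps @ [(p, v), (v, q)]) s
      = n_components (insert v ?V) (state_arcs cs ps s \<union> {(p, v), (v, q)})"
    unfolding state_loops_eq_n_components state_arcs_append
    by (rule n_components_cong) (auto simp: labels_conv)
  also have "\<dots> = n_components ?V (state_arcs cs ps s \<union> {(p, q)})"
    using assms avoid by (intro n_components_contract_vertex) auto
  also have "\<dots> = state_loops (cs, ps @ [(p, q)]) s"
    unfolding state_loops_eq_n_components state_arcs_append
    by (rule n_components_cong) (auto simp: labels_conv)
  finally show "state_loops (cs, ps @ [(p, v), (v, q)]) s = state_loops (cs, ps @ [(p, q)]) s" .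
qed

lemma bracket_add_loop:
  assumes "e \<notin> labels (cs, ps)" "f \<notin> labels (cs, ps)"
  shows "bracket (cs, ps @ [(e, f)]) A = loop_value A * bracket (cs, ps) A"
proof (rule bracket_state_loops_shift[where k = 1, simplified])
  fix s
  have avoid: "\<forall>(x, y) \<in> state_arcs cs ps s. x \<noteq> e \<and> y \<noteq> e \<and> x \<noteq> f \<and> y \<noteq> f"
    using assms state_arcs_in_labels by fast
  have "state_loops (cs, ps @ [(e, f)]) s
      = n_components (insert e (insert f (labels (cs, ps)))) (state_arcs cs ps s \<union> {(e, f)})"
    unfolding state_loops_eq_n_components state_arcs_append
    by (rule n_components_cong) (auto simp: labels_conv)
  also have "\<dots> = Suc (state_loops (cs, ps) s)"
    unfolding state_loops_eq_n_components using assms avoid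
    by (intro n_components_add_loop) (auto simp: labels_def)
  finally show "state_loops (cs, ps @ [(e, f)]) s = Suc (state_loops (cs, ps) s)" .
qed

lemma loop_value_inverse: "loop_value (inverse A) = loop_value A"
  unfolding loop_value_def by (simp add: power_inverse)

text \<open>Since \<open>lam A + 2 = loop_value A ^ 2\<close>, the normalising denominators of the two Jones
  polynomials cancel; when \<open>loop_value A = 0\<close> they are divisions by zero.\<close>

lemma R_diag_eq_bracket_product:
  assumes "A \<noteq> 0"
  shows "R_diag D A = (if loop_value A = 0 then 0 else bracket D A * bracket D (inverse A))"
proof -
  have "lam A + 2 = loop_value A ^ 2"
    unfolding lam_def loop_value_def using assms
    by (simp add: field_simps power2_eq_square) (simp add: eval_nat_numeral)
  then show ?thesis
    unfolding R_diag_def jones_V_def loop_value_inverse by (simp add: power2_eq_square)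
qed

text \<open>In \<open>bracket_twist_XY\<close>, X and Y are the smoothings (A = \<open>True\<close>, B = \<open>False\<close>) of the
  crossings \<open>(a, b, f, e)\<close> and \<open>(e, f, c, d)\<close> of the twist; \<open>e\<close> and \<open>f\<close> label the
  two arcs between them.\<close>

context
  fixes cs :: "pd_crossing list" and ps :: "(nat \<times> nat) list" and a b c d e f :: nat
  assumes distinct: "distinct [a, b, c, d, e, f]"
    and e_fresh: "e \<notin> labels (cs, ps)" and f_fresh: "f \<notin> labels (cs, ps)"
begin

lemma bracket_twist_AA:
  "bracket (cs, ps @ [(e, d), (f, c), (a, e), (b, f)]) B = bracket (cs, ps @ [(a, d), (b, c)]) B"
proof -
  have "bracket (cs, ps @ [(e, d), (f, c), (a, e), (b, f)]) B
      = bracket (cs, (ps @ [(b, f), (f, c)]) @ [(a, e), (e, d)]) B"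
    by (rule bracket_arcs_cong) auto
  also have "\<dots> = bracket (cs, (ps @ [(b, f), (f, c)]) @ [(a, d)]) B"
    by (rule bracket_contract_arcs) (use distinct e_fresh in \<open>auto simp: labels_conv\<close>)
  also have "\<dots> = bracket (cs, (ps @ [(a, d)]) @ [(b, f), (f, c)]) B"
    by (rule bracket_arcs_cong) auto
  also have "\<dots> = bracket (cs, (ps @ [(a, d)]) @ [(b, c)]) B"
    by (rule bracket_contract_arcs) (use distinct f_fresh in \<open>auto simp: labels_conv\<close>)
  finally show ?thesis by simp
qed

lemma bracket_twist_BA:
  "bracket (cs, ps @ [(e, d), (f, c), (a, b), (f, e)]) B = bracket (cs, ps @ [(a, b), (c, d)]) B"
proof -
  have "bracket (cs, ps @ [(e, d), (f, c), (a, b), (f, e)]) B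
      = bracket (cs, (ps @ [(e, d), (a, b)]) @ [(c, f), (f, e)]) B"
    by (rule bracket_arcs_cong) auto
  also have "\<dots> = bracket (cs, (ps @ [(e, d), (a, b)]) @ [(c, e)]) B"
    by (rule bracket_contract_arcs) (use distinct f_fresh in \<open>auto simp: labels_conv\<close>)
  also have "\<dots> = bracket (cs, (ps @ [(a, b)]) @ [(c, e), (e, d)]) B"
    by (rule bracket_arcs_cong) auto
  also have "\<dots> = bracket (cs, (ps @ [(a, b)]) @ [(c, d)]) B"
    by (rule bracket_contract_arcs) (use distinct e_fresh in \<open>auto simp: labels_conv\<close>)
  finally show ?thesis by simp
qed

lemma bracket_twist_AB:
  "bracket (cs, ps @ [(e, f), (c, d), (a, e), (b, f)]) B = bracket (cs, ps @ [(a, b), (c, d)]) B"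
proof -
  have "bracket (cs, ps @ [(e, f), (c, d), (a, e), (b, f)]) B
      = bracket (cs, (ps @ [(c, d), (b, f)]) @ [(a, e), (e, f)]) B"
    by (rule bracket_arcs_cong) auto
  also have "\<dots> = bracket (cs, (ps @ [(c, d), (b, f)]) @ [(a, f)]) B"
    by (rule bracket_contract_arcs) (use distinct e_fresh in \<open>auto simp: labels_conv\<close>)
  also have "\<dots> = bracket (cs, (ps @ [(c, d)]) @ [(a, f), (f, b)]) B"
    by (rule bracket_arcs_cong) auto
  also have "\<dots> = bracket (cs, (ps @ [(c, d)]) @ [(a, b)]) B"
    by (rule bracket_contract_arcs) (use distinct f_fresh in \<open>auto simp: labels_conv\<close>)
  also have "\<dots> = bracket (cs, ps @ [(a, b), (c, d)]) B"
    by (rule bracket_arcs_cong) auto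
  finally show ?thesis .
qed

lemma bracket_twist_BB:
  "bracket (cs, ps @ [(e, f), (c, d), (a, b), (f, e)]) B
     = loop_value B * bracket (cs, ps @ [(a, b), (c, d)]) B"
proof -
  have "bracket (cs, ps @ [(e, f), (c, d), (a, b), (f, e)]) B
      = bracket (cs, (ps @ [(a, b), (c, d)]) @ [(e, f)]) B"
    by (rule bracket_arcs_cong) auto
  also have "\<dots> = loop_value B * bracket (cs, ps @ [(a, b), (c, d)]) B"
    by (rule bracket_add_loop) (use distinct e_fresh f_fresh in \<open>auto simp: labels_conv\<close>)
  finally show ?thesis .
qed

lemma bracket_twist:
  assumes "B \<noteq> 0"
  shows "bracket (cs @ [(a, b, f, e), (e, f, c, d)], ps) B
    = B ^ 2 * bracket (cs, ps @ [(a, d), (b, c)]) B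
      + (1 - inverse B ^ 4) * bracket (cs, ps @ [(a, b), (c, d)]) B"
proof -
  have "bracket (cs @ [(a, b, f, e), (e, f, c, d)], ps) B
    = B * (B * bracket (cs, ps @ [(e, d), (f, c), (a, e), (b, f)]) B
           + inverse B * bracket (cs, ps @ [(e, d), (f, c), (a, b), (f, e)]) B)
    + inverse B * (B * bracket (cs, ps @ [(e, f), (c, d), (a, e), (b, f)]) B
           + inverse B * bracket (cs, ps @ [(e, f), (c, d), (a, b), (f, e)]) B)"
    using bracket_snoc[OF assms, of "cs @ [(a, b, f, e)]" "(e, f, c, d)" ps]
      bracket_snoc[OF assms, of cs "(a, b, f, e)"] by simp
  also have "\<dots> = B ^ 2 * bracket (cs, ps @ [(a, d), (b, c)]) B
      + (1 - inverse B ^ 4) * bracket (cs, ps @ [(a, b), (c, d)]) B"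
    unfolding bracket_twist_AA bracket_twist_BA bracket_twist_AB bracket_twist_BB loop_value_def
    using assms by (simp add: field_simps) (simp add: algebra_simps eval_nat_numeral)
  finally show ?thesis .
qed

end

lemma skein_product_identity:
  fixes u x y x' y' :: "'a::field"
  assumes "u \<noteq> 0"
  shows "(u^2 * x + (1 - inverse u ^ 4) * y) * (inverse u ^ 2 * x' + (1 - u ^ 4) * y')
     = (1 - (u^4 + inverse u^4)) * ((u * x + inverse u * y) * (inverse u * x' + u * y'))
     + ((u^4 + inverse u^4) - 1) * (x * x') + (u * y + inverse u * x) * (inverse u * y' + u * x')"
  using assms by (simp add: field_simps) (simp add: algebra_simps power2_eq_square eval_nat_numeral)

theorem lemma1:
  fixes cs :: "pd_crossing list" and ps :: "(nat \<times> nat) list"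
    and a b c d e f :: nat and A :: complex
  assumes "distinct [a, b, c, d, e, f]"
    and "e \<notin> labels (cs, ps)" and "f \<notin> labels (cs, ps)"
    and "is_diagram (cs @ [(a, b, f, e), (e, f, c, d)], ps)"
    and "is_diagram (cs @ [(a, b, c, d)], ps)"
    and "is_diagram (cs, ps @ [(a, d), (b, c)])"
    and "is_diagram (cs @ [(b, c, d, a)], ps)"
    and "A \<noteq> 0"
  shows "R_diag (cs @ [(a, b, f, e), (e, f, c, d)], ps) A =
           (1 - lam A) * R_diag (cs @ [(a, b, c, d)], ps) A
         + (lam A - 1) * R_diag (cs, ps @ [(a, d), (b, c)]) A
         + R_diag (cs @ [(b, c, d, a)], ps) A"
proof -
  let ?D0 = "(cs, ps @ [(a, d), (b, c)])" and ?Dinf = "(cs, ps @ [(a, b), (c, d)])"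
  have twist: "bracket (cs @ [(a, b, f, e), (e, f, c, d)], ps) B
      = B ^ 2 * bracket ?D0 B + (1 - inverse B ^ 4) * bracket ?Dinf B" if "B \<noteq> 0" for B
    using bracket_twist[OF assms(1-3) that] .
  have crossing: "bracket (cs @ [(a, b, c, d)], ps) B
      = B * bracket ?D0 B + inverse B * bracket ?Dinf B" if "B \<noteq> 0" for B
    using bracket_snoc[OF that] by simp
  have reversed_arcs: "bracket (cs, ps @ [(b, a), (c, d)]) B = bracket ?Dinf B"
    "bracket (cs, ps @ [(b, c), (d, a)]) B = bracket ?D0 B" for B
    by (rule bracket_arcs_cong; auto)+
  have crossing_inv: "bracket (cs @ [(b, c, d, a)], ps) B
      = B * bracket ?Dinf B + inverse B * bracket ?D0 B" if "B \<noteq> 0" for B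
    using bracket_snoc[OF that, of cs "(b, c, d, a)" ps] by (simp add: reversed_arcs)
  show ?thesis
  proof (cases "loop_value A = 0")
    case True
    then show ?thesis using assms(8) by (simp add: R_diag_eq_bracket_product)
  next
    case False
    then show ?thesis
      using assms(8) skein_product_identity[OF assms(8), of "bracket ?D0 A" "bracket ?Dinf A"
          "bracket ?D0 (inverse A)" "bracket ?Dinf (inverse A)"]
      by (simp add: R_diag_eq_bracket_product twist crossing crossing_inv lam_def)
  qed
qed

end
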